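(* Let $A$ be a sequence algebra and $X$ an essential homogeneous normed $A$-module. Then for every $x\in X$, $x=\lim_{N\to\infty}\mathbf P^N\cdot x$, where $\mathbf P^N:=\sum_{n=1}^N\mathbf p^n$.
   Context: Modules are contractive ($\|a\cdot x\|\le\|a\|\|x\|$). A sequence algebra is a normed algebra of complex sequences with coordinatewise operations containing $c_{00}$ (finite sequences) as a dense subalgebra, with $\|\mathbf p^n\|=1$, where $\mathbf p^n$ has $1$ in place $n$ and $0$ elsewhere. For $x\in X$, $x_n:=\mathbf p^n\cdot x$. $X$ is essential if the closed linear span of $\{a\cdot x:a\in A,x\in X\}$ is $X$; homogeneous if for $x,y\in X$, $\|x_n\|\le\|y_n\|$ for all $n$ implies $\|x\|\le\|y\|$. *)

theory Defs
  imports "HOL-Analysis.Analysis"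
begin

text \<open>Sequences are indexed by nat starting at 0 (coordinate 0 plays the role of the
paper's coordinate 1).\<close>

type_synonym cseq = "nat \<Rightarrow> complex"

definition unit_seq :: "nat \<Rightarrow> cseq" where
  "unit_seq n = (\<lambda>k. if k = n then 1 else 0)"

definition finite_seq :: "cseq \<Rightarrow> bool" where
  "finite_seq a \<longleftrightarrow> finite {n. a n \<noteq> 0}"

definition sequence_algebra :: "cseq set \<Rightarrow> (cseq \<Rightarrow> real) \<Rightarrow> bool" where
  "sequence_algebra SA nA \<longleftrightarrow>
     (\<forall>a\<in>SA. \<forall>b\<in>SA. (\<lambda>n. a n + b n) \<in> SA) \<and>
     (\<forall>a\<in>SA. \<forall>c. (\<lambda>n. c * a n) \<in> SA) \<and>
     (\<forall>a\<in>SA. \<forall>b\<in>SA. (\<lambda>n. a n * b n) \<in> SA) \<and>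
     (\<forall>a\<in>SA. 0 \<le> nA a) \<and>
     (\<forall>a\<in>SA. nA a = 0 \<longleftrightarrow> a = (\<lambda>n. 0)) \<and>
     (\<forall>a\<in>SA. \<forall>b\<in>SA. nA (\<lambda>n. a n + b n) \<le> nA a + nA b) \<and>
     (\<forall>a\<in>SA. \<forall>c. nA (\<lambda>n. c * a n) = cmod c * nA a) \<and>
     (\<forall>a\<in>SA. \<forall>b\<in>SA. nA (\<lambda>n. a n * b n) \<le> nA a * nA b) \<and>
     {a. finite_seq a} \<subseteq> SA \<and>
     (\<forall>a\<in>SA. \<forall>e>0. \<exists>b. finite_seq b \<and> nA (\<lambda>n. a n - b n) < e) \<and>
     (\<forall>n. nA (unit_seq n) = 1)"

definition complex_normed_space :: "(complex \<Rightarrow> 'x::real_normed_vector \<Rightarrow> 'x) \<Rightarrow> bool" where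
  "complex_normed_space sc \<longleftrightarrow>
     (\<forall>c d x. sc (c + d) x = sc c x + sc d x) \<and>
     (\<forall>c x y. sc c (x + y) = sc c x + sc c y) \<and>
     (\<forall>c d x. sc (c * d) x = sc c (sc d x)) \<and>
     (\<forall>r x. sc (complex_of_real r) x = r *\<^sub>R x) \<and>
     (\<forall>c x. norm (sc c x) = cmod c * norm x)"

definition normed_module ::
  "cseq set \<Rightarrow> (cseq \<Rightarrow> real) \<Rightarrow> (complex \<Rightarrow> 'x::real_normed_vector \<Rightarrow> 'x)
     \<Rightarrow> (cseq \<Rightarrow> 'x \<Rightarrow> 'x) \<Rightarrow> bool" where
  "normed_module SA nA sc act \<longleftrightarrow>
     complex_normed_space sc \<and>
     (\<forall>a\<in>SA. \<forall>b\<in>SA. \<forall>x. act (\<lambda>n. a n + b n) x = act a x + act b x) \<and>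
     (\<forall>a\<in>SA. \<forall>c x. act (\<lambda>n. c * a n) x = sc c (act a x)) \<and>
     (\<forall>a\<in>SA. \<forall>x y. act a (x + y) = act a x + act a y) \<and>
     (\<forall>a\<in>SA. \<forall>c x. act a (sc c x) = sc c (act a x)) \<and>
     (\<forall>a\<in>SA. \<forall>b\<in>SA. \<forall>x. act (\<lambda>n. a n * b n) x = act a (act b x)) \<and>
     (\<forall>a\<in>SA. \<forall>x. norm (act a x) \<le> nA a * norm x)"

definition cspan :: "(complex \<Rightarrow> 'x::real_normed_vector \<Rightarrow> 'x) \<Rightarrow> 'x set \<Rightarrow> 'x set" where
  "cspan sc S = {y. \<exists>(F::nat set) c v. finite F \<and> (\<forall>i\<in>F. v i \<in> S) \<and>
                    y = (\<Sum>i\<in>F. sc (c i) (v i))}"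

definition essential_module ::
  "cseq set \<Rightarrow> (complex \<Rightarrow> 'x::real_normed_vector \<Rightarrow> 'x) \<Rightarrow> (cseq \<Rightarrow> 'x \<Rightarrow> 'x) \<Rightarrow> bool" where
  "essential_module SA sc act \<longleftrightarrow>
     closure (cspan sc {act a x | a x. a \<in> SA}) = UNIV"

definition homogeneous_module :: "(cseq \<Rightarrow> 'x::real_normed_vector \<Rightarrow> 'x) \<Rightarrow> bool" where
  "homogeneous_module act \<longleftrightarrow>
     (\<forall>x y. (\<forall>n. norm (act (unit_seq n) x) \<le> norm (act (unit_seq n) y)) \<longrightarrow> norm x \<le> norm y)"

end

theory Submission
  imports Defs
begin

(* Write P N for the truncation sequence (1 on {0..<N}, 0 elsewhere) and let
   G be the set of vectors z with P N . z --> z.  Then: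
   (1) each P N acts as a contraction: by homogeneity it suffices to compare coordinates,
       and p^n . (P N . z) is either p^n . z or 0;
   (2) for any sequence of linear contractions T N, the set {z. T N z --> z} is closed
       (an epsilon/3 argument), so G is closed; G is also closed under the vector space
       operations, hence contains the complex span of each of its subsets;
   (3) G contains b . x for finitely supported b (as P N b = b for large N), hence, by
       density of c00 in A and continuity of a |-> a . x, every a . x with a in A;
   (4) so G contains the closure of the span of A . X, which is X by essentiality. *)

definition truncation :: "nat \<Rightarrow> cseq" where
  "truncation N = (\<lambda>k. if k < N then 1 else 0)"

lemma sum_unit_seq_eq_truncation: "(\<lambda>k. \<Sum>n<N. unit_seq n k) = truncation N"
  by (simp add: unit_seq_def truncation_def)

lemma finite_seq_truncation: "finite_seq (truncation N)"
  unfolding finite_seq_def truncation_def by (rule finite_subset[of _ "{..<N}"]) auto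

lemma finite_seq_unit_seq: "finite_seq (unit_seq n)"
  unfolding finite_seq_def unit_seq_def by (rule finite_subset[of _ "{n}"]) auto

lemma truncation_mult_finite_seq:
  assumes "finite_seq b"
  shows "\<exists>M. \<forall>N\<ge>M. (\<lambda>k. truncation N k * b k) = b"
proof -
  obtain M where "{n. b n \<noteq> 0} \<subseteq> {..<M}"
    using assms finite_nat_bounded unfolding finite_seq_def by blast
  then have "(\<lambda>k. truncation N k * b k) = b" if "N \<ge> M" for N
    using that by (auto simp: truncation_def fun_eq_iff)
  then show ?thesis by blast
qed

lemma unit_seq_mult_truncation:
  "(\<lambda>k. unit_seq n k * truncation N k) = (if n < N then unit_seq n else (\<lambda>k. 0))"
  by (auto simp: unit_seq_def truncation_def)

lemma closed_convergence_set:
  fixes T :: "nat \<Rightarrow> 'a::real_normed_vector \<Rightarrow> 'a"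
  assumes lin: "\<And>N. linear (T N)"
    and contr: "\<And>N u. norm (T N u) \<le> norm u"
  shows "closed {z. (\<lambda>N. T N z) \<longlonglongrightarrow> z}"
  unfolding closure_subset_eq[symmetric]
proof
  fix z assume "z \<in> closure {z. (\<lambda>N. T N z) \<longlonglongrightarrow> z}"
  then have approx: "\<forall>e>0. \<exists>w\<in>{z. (\<lambda>N. T N z) \<longlonglongrightarrow> z}. dist w z < e"
    by (simp only: closure_approachable)
  show "z \<in> {z. (\<lambda>N. T N z) \<longlonglongrightarrow> z}"
    unfolding mem_Collect_eq tendsto_iff dist_norm
  proof (intro allI impI)
    fix r :: real assume "r > 0"
    then obtain w where w_lim: "(\<lambda>N. T N w) \<longlonglongrightarrow> w" and "dist w z < r / 3"
      using approx by (metis mem_Collect_eq zero_less_divide_iff zero_less_numeral)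
    then have w_close: "norm (z - w) < r / 3" by (simp add: dist_norm norm_minus_commute)
    have "eventually (\<lambda>N. norm (T N w - w) < r / 3) sequentially"
      using w_lim \<open>r > 0\<close> unfolding tendsto_iff dist_norm by (simp del: less_divide_eq_numeral1)
    then show "eventually (\<lambda>N. norm (T N z - z) < r) sequentially"
    proof eventually_elim
      case (elim N)
      have "T N z - z = T N (z - w) + (T N w - w) - (z - w)"
        using linear_diff[OF lin] by (simp add: algebra_simps)
      then have "norm (T N z - z) \<le> norm (T N (z - w) + (T N w - w)) + norm (z - w)"
        by (simp only: norm_triangle_ineq4)
      also have "\<dots> \<le> norm (T N (z - w)) + norm (T N w - w) + norm (z - w)"
        by (rule add_right_mono[OF norm_triangle_ineq])
      also have "\<dots> < r" using contr[of N "z - w"] w_close elim by linarith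
      finally show ?case .
    qed
  qed
qed

lemma cspan_subset:
  assumes "S \<subseteq> V" "0 \<in> V"
    and add: "\<And>u v. u \<in> V \<Longrightarrow> v \<in> V \<Longrightarrow> u + v \<in> V"
    and scale: "\<And>c u. u \<in> V \<Longrightarrow> sc c u \<in> V"
  shows "cspan sc S \<subseteq> V"
proof
  fix y assume "y \<in> cspan sc S"
  then obtain F :: "nat set" and c v where "finite F" and in_S: "\<forall>i\<in>F. v i \<in> S"
    and y: "y = (\<Sum>i\<in>F. sc (c i) (v i))" unfolding cspan_def by blast
  have "\<forall>i\<in>F. v i \<in> V" using in_S \<open>S \<subseteq> V\<close> by blast
  with \<open>finite F\<close> have "(\<Sum>i\<in>F. sc (c i) (v i)) \<in> V"
    by (induction F rule: finite_induct) (auto simp: \<open>0 \<in> V\<close> add scale)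
  then show "y \<in> V" using y by simp
qed

locale seq_module =
  fixes SA :: "cseq set" and nA :: "cseq \<Rightarrow> real"
    and sc :: "complex \<Rightarrow> 'x::real_normed_vector \<Rightarrow> 'x"
    and act :: "cseq \<Rightarrow> 'x \<Rightarrow> 'x"
  assumes algebra: "sequence_algebra SA nA"
    and module: "normed_module SA nA sc act"
begin

lemma finite_seq_in: "finite_seq b \<Longrightarrow> b \<in> SA"
  using algebra unfolding sequence_algebra_def by blast

lemma truncation_in: "truncation N \<in> SA"
  using finite_seq_in[OF finite_seq_truncation] .

lemma unit_seq_in: "unit_seq n \<in> SA"
  using finite_seq_in[OF finite_seq_unit_seq] .

lemma diff_in:
  assumes "a \<in> SA" "b \<in> SA" shows "(\<lambda>n. a n - b n) \<in> SA"
proof -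
  have "(\<lambda>n. (-1) * b n) \<in> SA" and "\<forall>c\<in>SA. (\<lambda>n. a n + c n) \<in> SA"
    using algebra assms unfolding sequence_algebra_def by blast+
  then show ?thesis by fastforce
qed

lemma finite_seq_dense:
  "a \<in> SA \<Longrightarrow> e > 0 \<Longrightarrow> \<exists>b. finite_seq b \<and> nA (\<lambda>n. a n - b n) < e"
  using algebra unfolding sequence_algebra_def by blast

lemma act_add: "a \<in> SA \<Longrightarrow> b \<in> SA \<Longrightarrow> act (\<lambda>n. a n + b n) x = act a x + act b x"
  using module unfolding normed_module_def by blast

lemma act_mult: "a \<in> SA \<Longrightarrow> b \<in> SA \<Longrightarrow> act (\<lambda>n. a n * b n) x = act a (act b x)"
  using module unfolding normed_module_def by blast

lemma act_norm: "a \<in> SA \<Longrightarrow> norm (act a x) \<le> nA a * norm x"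
  using module unfolding normed_module_def by blast

lemma act_add_right: "a \<in> SA \<Longrightarrow> act a (x + y) = act a x + act a y"
  using module unfolding normed_module_def by blast

lemma act_sc: "a \<in> SA \<Longrightarrow> act a (sc c x) = sc c (act a x)"
  using module unfolding normed_module_def by blast

lemma sc_space: "complex_normed_space sc"
  using module unfolding normed_module_def by blast

lemma sc_add_right: "sc c (x + y) = sc c x + sc c y"
  using sc_space unfolding complex_normed_space_def by blast

lemma sc_mult: "sc (c * d) x = sc c (sc d x)"
  using sc_space unfolding complex_normed_space_def by blast

lemma sc_of_real: "sc (complex_of_real r) x = r *\<^sub>R x"
  using sc_space unfolding complex_normed_space_def by blast

lemma sc_norm: "norm (sc c x) = cmod c * norm x"
  using sc_space unfolding complex_normed_space_def by blast

lemma sc_bounded_linear: "bounded_linear (sc c)"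
proof (rule bounded_linear_intro[of _ "cmod c"])
  show "sc c (r *\<^sub>R x) = r *\<^sub>R sc c x" for r x
  proof -
    have "sc c (r *\<^sub>R x) = sc (c * complex_of_real r) x" by (simp add: sc_mult sc_of_real)
    also have "\<dots> = sc (complex_of_real r * c) x" by (simp only: mult.commute)
    also have "\<dots> = r *\<^sub>R sc c x" by (simp only: sc_mult sc_of_real)
    finally show ?thesis .
  qed
qed (simp_all add: sc_add_right sc_norm mult.commute)

lemma act_bounded_linear:
  assumes "a \<in> SA" shows "bounded_linear (act a)"
proof (rule bounded_linear_intro[of _ "nA a"])
  show "act a (r *\<^sub>R x) = r *\<^sub>R act a x" for r x
    using act_sc[OF assms, of "complex_of_real r"] by (simp add: sc_of_real)
qed (use assms act_add_right act_norm in \<open>simp_all add: mult.commute\<close>)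

lemma act_zero_seq: "act (\<lambda>k. 0) x = 0"
proof -
  have zero_in: "(\<lambda>k. 0) \<in> SA" by (simp add: finite_seq_in finite_seq_def)
  then have "nA (\<lambda>k. 0) = 0" using algebra unfolding sequence_algebra_def by blast
  then show ?thesis using act_norm[OF zero_in, of x] by simp
qed

lemma truncation_act_finite_seq:
  assumes "finite_seq b"
  shows "(\<lambda>N. act (truncation N) (act b x)) \<longlonglongrightarrow> act b x"
proof -
  obtain M where "\<forall>N\<ge>M. (\<lambda>k. truncation N k * b k) = b"
    using truncation_mult_finite_seq[OF assms] by blast
  then have "\<forall>N\<ge>M. act (truncation N) (act b x) = act b x"
    using act_mult[OF truncation_in finite_seq_in[OF assms]] by metis
  then show ?thesis
    by (intro tendsto_eventually) (auto simp: eventually_sequentially)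
qed

lemma act_approx_finite_seq:
  assumes "a \<in> SA" "e > 0"
  shows "\<exists>b. finite_seq b \<and> norm (act a x - act b x) < e"
proof -
  have "norm x + 1 > 0" by (simp add: add_nonneg_pos)
  then have "e / (norm x + 1) > 0" using assms(2) by simp
  then obtain b where b: "finite_seq b" and close: "nA (\<lambda>n. a n - b n) < e / (norm x + 1)"
    using finite_seq_dense[OF assms(1)] by blast
  have b_in: "b \<in> SA" and d_in: "(\<lambda>n. a n - b n) \<in> SA"
    using finite_seq_in[OF b] diff_in[OF assms(1)] by auto
  have "act a x = act (\<lambda>n. (a n - b n) + b n) x" by simp
  then have "act a x - act b x = act (\<lambda>n. a n - b n) x"
    using act_add[OF d_in b_in] by simp
  then have "norm (act a x - act b x) \<le> nA (\<lambda>n. a n - b n) * norm x"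
    using act_norm[OF d_in] by simp
  also have "\<dots> \<le> e / (norm x + 1) * norm x"
    using close by (intro mult_right_mono) auto
  also have "\<dots> < e / (norm x + 1) * (norm x + 1)"
    using \<open>e / (norm x + 1) > 0\<close> by (intro mult_strict_left_mono) auto
  also have "\<dots> = e" using \<open>norm x + 1 > 0\<close> by simp
  finally show ?thesis using b by blast
qed

definition truncation_limits :: "'x set" where
  "truncation_limits = {z. (\<lambda>N. act (truncation N) z) \<longlonglongrightarrow> z}"

lemma truncation_linear: "linear (act (truncation N))"
  using bounded_linear.linear[OF act_bounded_linear[OF truncation_in]] .

lemma cspan_subset_truncation_limits:
  assumes "S \<subseteq> truncation_limits"
  shows "cspan sc S \<subseteq> truncation_limits"
proof (rule cspan_subset[OF assms])
  show "0 \<in> truncation_limits"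
    unfolding truncation_limits_def by (simp add: linear_0[OF truncation_linear])
  show "u + v \<in> truncation_limits" if "u \<in> truncation_limits" "v \<in> truncation_limits" for u v
    using that unfolding truncation_limits_def
    by (simp add: linear_add[OF truncation_linear] tendsto_add)
  show "sc c u \<in> truncation_limits" if "u \<in> truncation_limits" for c u
    using bounded_linear.tendsto[OF sc_bounded_linear that[unfolded truncation_limits_def mem_Collect_eq]]
    unfolding truncation_limits_def by (simp add: act_sc[OF truncation_in])
qed

end

locale homogeneous_seq_module = seq_module +
  assumes homogeneous: "homogeneous_module act"
begin

text \<open>In a homogeneous module the truncations act as contractions, since each coordinate
  of P N . x is either the corresponding coordinate of x or zero.\<close>
lemma truncation_contraction: "norm (act (truncation N) x) \<le> norm x"
proof -
  have "norm (act (unit_seq n) (act (truncation N) x)) \<le> norm (act (unit_seq n) x)" for n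
  proof -
    have "act (unit_seq n) (act (truncation N) x) = act (if n < N then unit_seq n else (\<lambda>k. 0)) x"
      using act_mult[OF unit_seq_in truncation_in]
      by (simp add: unit_seq_mult_truncation)
    then show ?thesis by (cases "n < N") (simp_all add: act_zero_seq)
  qed
  then show ?thesis using homogeneous unfolding homogeneous_module_def by blast
qed

lemma closed_truncation_limits: "closed truncation_limits"
  unfolding truncation_limits_def
  using truncation_linear truncation_contraction by (rule closed_convergence_set)

text \<open>Every product a . x lies in the closed set of truncation limits, being approximated
  by products b . x with b finitely supported.\<close>
lemma act_in_truncation_limits:
  assumes "a \<in> SA" shows "act a x \<in> truncation_limits"
proof -
  have "\<exists>w\<in>truncation_limits. dist w (act a x) < e" if e_pos: "e > 0" for e
  proof -
    obtain b where "finite_seq b" "norm (act a x - act b x) < e"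
      using act_approx_finite_seq[OF assms e_pos] by blast
    then show ?thesis using truncation_act_finite_seq unfolding truncation_limits_def
      by (intro bexI[of _ "act b x"]) (auto simp: dist_norm norm_minus_commute)
  qed
  then show ?thesis using closed_approachable[OF closed_truncation_limits] by blast
qed

end

theorem proposition1p5:
  fixes SA :: "cseq set" and nA :: "cseq \<Rightarrow> real"
    and sc :: "complex \<Rightarrow> 'x::real_normed_vector \<Rightarrow> 'x"
    and act :: "cseq \<Rightarrow> 'x \<Rightarrow> 'x"
  assumes "sequence_algebra SA nA"
    and "normed_module SA nA sc act"
    and "essential_module SA sc act"
    and "homogeneous_module act"
  shows "\<forall>x. (\<lambda>N. act (\<lambda>k. \<Sum>n<N. unit_seq n k) x) \<longlonglongrightarrow> x"
proof -
  interpret homogeneous_seq_module SA nA sc act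
    using assms(1,2,4) by unfold_locales
  have "cspan sc {act a x | a x. a \<in> SA} \<subseteq> truncation_limits"
    using act_in_truncation_limits by (intro cspan_subset_truncation_limits) blast
  then have "closure (cspan sc {act a x | a x. a \<in> SA}) \<subseteq> truncation_limits"
    using closed_truncation_limits by (rule closure_minimal)
  then show ?thesis
    using assms(3) unfolding essential_module_def truncation_limits_def sum_unit_seq_eq_truncation
    by blast
qed

end
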